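(* Let $N=[n]$, let $v:2^N\to\mathbb{R}_+$ be any monotone valuation with $v(\emptyset)=0$, and let $X$ be a maximal decision map for $v$. Then there exists a pure Nash equilibrium $p\in\mathbb{R}^n_+$ of the pricing game defined by $v$ and $X$ with $X(p)=N$.
   Context: Pricing game: $N=[n]$ is a set of services, service $i$ controlled by seller $i$. A buyer has valuation $v:2^N\to\mathbb{R}_+$, monotone ($v(S)\le v(T)$ for $S\subseteq T$) with $v(\emptyset)=0$. For $p\in\mathbb{R}^n_+$, $p(S)=\sum_{j\in S}p_j$ and $D(v;p)=\arg\max_{S\subseteq N}(v(S)-p(S))$. A decision map is $X:\mathbb{R}^n_+\to 2^N$ with $X(p)\in D(v;p)$ for all $p$; it is maximal if for every $p$ there is no $S'\in D(v;p)$ with $X(p)\subsetneq S'$. Seller $i$ chooses a price $p_i\in\mathbb{R}_+$ and has utility $u_i(p)=p_i\cdot\mathbf{1}\{i\in X(p)\}$. A pure Nash equilibrium is a $p$ such that $u_i(p)\ge u_i(p_i',p_{-i})$ for all $i$ and all $p_i'\in\mathbb{R}_+$. *)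

theory Defs
  imports Complex_Main
begin

definition services :: "nat \<Rightarrow> nat set" where
  "services n = {0..<n}"

definition price_vectors :: "nat \<Rightarrow> (nat \<Rightarrow> real) set" where
  "price_vectors n = {p. (\<forall>i\<in>services n. 0 \<le> p i) \<and> (\<forall>i. i \<notin> services n \<longrightarrow> p i = 0)}"

definition valuation :: "nat \<Rightarrow> (nat set \<Rightarrow> real) \<Rightarrow> bool" where
  "valuation n v \<longleftrightarrow> v {} = 0 \<and> (\<forall>S. S \<subseteq> services n \<longrightarrow> 0 \<le> v S) \<and>
     (\<forall>S T. S \<subseteq> T \<and> T \<subseteq> services n \<longrightarrow> v S \<le> v T)"

definition price_of :: "(nat \<Rightarrow> real) \<Rightarrow> nat set \<Rightarrow> real" where
  "price_of p S = (\<Sum>j\<in>S. p j)"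

definition demand :: "nat \<Rightarrow> (nat set \<Rightarrow> real) \<Rightarrow> (nat \<Rightarrow> real) \<Rightarrow> nat set set" where
  "demand n v p = {S. S \<subseteq> services n \<and>
      (\<forall>T. T \<subseteq> services n \<longrightarrow> v T - price_of p T \<le> v S - price_of p S)}"

definition decision_map :: "nat \<Rightarrow> (nat set \<Rightarrow> real) \<Rightarrow> ((nat \<Rightarrow> real) \<Rightarrow> nat set) \<Rightarrow> bool" where
  "decision_map n v X \<longleftrightarrow> (\<forall>p\<in>price_vectors n. X p \<in> demand n v p)"

definition maximal_decision_map :: "nat \<Rightarrow> (nat set \<Rightarrow> real) \<Rightarrow> ((nat \<Rightarrow> real) \<Rightarrow> nat set) \<Rightarrow> bool" where
  "maximal_decision_map n v X \<longleftrightarrow> decision_map n v X \<and>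
     (\<forall>p\<in>price_vectors n. \<not> (\<exists>S'\<in>demand n v p. X p \<subset> S'))"

definition seller_utility :: "((nat \<Rightarrow> real) \<Rightarrow> nat set) \<Rightarrow> nat \<Rightarrow> (nat \<Rightarrow> real) \<Rightarrow> real" where
  "seller_utility X i p = (if i \<in> X p then p i else 0)"

definition pure_nash :: "nat \<Rightarrow> ((nat \<Rightarrow> real) \<Rightarrow> nat set) \<Rightarrow> (nat \<Rightarrow> real) \<Rightarrow> bool" where
  "pure_nash n X p \<longleftrightarrow> p \<in> price_vectors n \<and>
     (\<forall>i\<in>services n. \<forall>q. 0 \<le> q \<longrightarrow> seller_utility X i (p(i := q)) \<le> seller_utility X i p)"

end

theory Submission
  imports Defs
begin

text \<open>Start from zero prices, at which the grand bundle N is demanded, and raise the prices of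
  the services one at a time: the price of service k goes up by the gap between N and the best
  bundle avoiding k. This lowers the buyer's utility of N and of every other bundle containing k
  by the same amount, so every bundle demanded before stays demanded, and now some demanded
  bundle avoids k. At the end N is demanded and every seller i is avoided by a demanded bundle.
  A maximal decision map therefore picks N, and a seller who strictly raises her price is
  dropped, since the bundle avoiding her now beats every bundle containing her.\<close>

lemma price_of_fun_upd:
  assumes "finite T"
  shows "price_of (p(k := t)) T = price_of p T + (if k \<in> T then t - p k else 0)"
proof -
  have "p(k := t) = (\<lambda>j. p j + (if j = k then t - p k else 0))"
    by auto
  then show ?thesis
    using assms by (simp add: price_of_def sum.distrib)
qed

lemma finite_if_subset_services: "T \<subseteq> services n \<Longrightarrow> finite T"
  unfolding services_def using finite_subset by blast

lemma demand_fun_upd_excludes_raised: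
  assumes "S \<in> demand n v p" and "k \<notin> S" and "p k < t"
    and "T \<in> demand n v (p(k := t))"
  shows "k \<notin> T"
proof
  assume "k \<in> T"
  have T: "T \<subseteq> services n" and S: "S \<subseteq> services n"
    using assms(1,4) unfolding demand_def by auto
  have "price_of (p(k := t)) T = price_of p T + (t - p k)"
    using price_of_fun_upd[OF finite_if_subset_services[OF T]] \<open>k \<in> T\<close> by simp
  moreover have "price_of (p(k := t)) S = price_of p S"
    using price_of_fun_upd[OF finite_if_subset_services[OF S]] assms(2) by simp
  moreover have "v T - price_of p T \<le> v S - price_of p S"
    using assms(1) T unfolding demand_def by auto
  moreover have "v S - price_of (p(k := t)) S \<le> v T - price_of (p(k := t)) T"
    using assms(4) S unfolding demand_def by auto
  ultimately show False
    using assms(3) by linarith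
qed

lemma exists_raise_making_service_avoidable:
  assumes "services n \<in> demand n v p" and "k \<in> services n"
  obtains t where "p k \<le> t" and "demand n v p \<subseteq> demand n v (p(k := t))"
    and "\<exists>S\<in>demand n v (p(k := t)). k \<notin> S"
proof -
  define N where "N = services n"
  define U where "U q T = v T - price_of q T" for q T
  define F where "F = {T. T \<subseteq> N \<and> k \<notin> T}"
  have "finite F"
    unfolding F_def N_def services_def by (rule finite_subset[of _ "Pow {0..<n}"]) auto
  moreover have "{} \<in> F"
    unfolding F_def by auto
  ultimately have "Max (U p ` F) \<in> U p ` F"
    by (intro Max_in) auto
  then obtain T0 where T0_Max: "Max (U p ` F) = U p T0" and "T0 \<in> F"
    by (rule imageE)
  then have T0: "T0 \<subseteq> N" "k \<notin> T0"
    unfolding F_def by auto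
  have T0_max: "U p T \<le> U p T0" if "T \<subseteq> N" "k \<notin> T" for T
    unfolding T0_Max[symmetric] using \<open>finite F\<close> that unfolding F_def by simp
  have N_max: "U p T \<le> U p N" if "T \<subseteq> N" for T
    using assms(1) that unfolding demand_def U_def N_def by blast
  define t where "t = p k + (U p N - U p T0)"
  have "p k \<le> t"
    using N_max[OF T0(1)] unfolding t_def by simp
  have U_upd: "U (p(k := t)) T = U p T - (if k \<in> T then U p N - U p T0 else 0)"
    if "T \<subseteq> N" for T
  proof -
    have "price_of (p(k := t)) T = price_of p T + (if k \<in> T then t - p k else 0)"
      using price_of_fun_upd finite_if_subset_services that unfolding N_def by blast
    then show ?thesis
      unfolding U_def t_def by simp
  qed
  have N_max': "U (p(k := t)) T \<le> U (p(k := t)) N" if "T \<subseteq> N" for T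
    using U_upd[OF that] U_upd[of N] N_max[OF that] T0_max[OF that] assms(2)
    unfolding N_def by (cases "k \<in> T") simp_all
  have demanded_if_as_good_as_N: "S \<in> demand n v (p(k := t))"
    if "S \<subseteq> N" "U (p(k := t)) N \<le> U (p(k := t)) S" for S
  proof -
    have "\<forall>T. T \<subseteq> N \<longrightarrow> U (p(k := t)) T \<le> U (p(k := t)) S"
      using N_max' that(2) order_trans by blast
    then show ?thesis
      using that(1) unfolding demand_def U_def N_def by simp
  qed
  have "demand n v p \<subseteq> demand n v (p(k := t))"
  proof
    fix S
    assume "S \<in> demand n v p"
    then have "S \<subseteq> N" "U p N \<le> U p S"
      unfolding demand_def U_def N_def by auto
    moreover have "U p S \<le> U p N"
      using N_max[OF \<open>S \<subseteq> N\<close>] .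
    ultimately have "U (p(k := t)) N \<le> U (p(k := t)) S"
      using U_upd[of S] U_upd[of N] N_max[OF T0(1)] assms(2) unfolding N_def by auto
    then show "S \<in> demand n v (p(k := t))"
      using demanded_if_as_good_as_N \<open>S \<subseteq> N\<close> by blast
  qed
  moreover have "T0 \<in> demand n v (p(k := t))"
    using U_upd[OF T0(1)] U_upd[of N] T0 assms(2) demanded_if_as_good_as_N
    unfolding N_def by simp
  ultimately show thesis
    using that \<open>p k \<le> t\<close> T0(2) by blast
qed

lemma exists_prices_every_service_avoidable:
  assumes "valuation n v" and "k \<le> n"
  shows "\<exists>p\<in>price_vectors n. services n \<in> demand n v p \<and>
    (\<forall>i<k. \<exists>S\<in>demand n v p. i \<notin> S)"
  using assms(2)
proof (induction k)
  case 0
  have "(\<lambda>_. 0) \<in> price_vectors n"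
    unfolding price_vectors_def by simp
  moreover have "services n \<in> demand n v (\<lambda>_. 0)"
    using assms(1) unfolding valuation_def demand_def price_of_def by auto
  ultimately show ?case
    by blast
next
  case (Suc k)
  then obtain p where p: "p \<in> price_vectors n" "services n \<in> demand n v p"
    and avoid: "\<forall>i<k. \<exists>S\<in>demand n v p. i \<notin> S"
    by auto
  have k: "k \<in> services n"
    using Suc.prems unfolding services_def by simp
  obtain t where t: "p k \<le> t" "demand n v p \<subseteq> demand n v (p(k := t))"
    and avoid_k: "\<exists>S\<in>demand n v (p(k := t)). k \<notin> S"
    using exists_raise_making_service_avoidable[OF p(2) k] by blast
  have "p(k := t) \<in> price_vectors n"
    using p(1) k t(1) unfolding price_vectors_def by force
  moreover have "\<exists>S\<in>demand n v (p(k := t)). i \<notin> S" if "i < Suc k" for i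
  proof (cases "i = k")
    case True
    then show ?thesis
      using avoid_k by simp
  next
    case False
    then have "i < k"
      using \<open>i < Suc k\<close> by simp
    then obtain S where "S \<in> demand n v p" "i \<notin> S"
      using avoid by blast
    then show ?thesis
      using t(2) by blast
  qed
  ultimately show ?case
    using p(2) t(2) by blast
qed

lemma pure_nash_if_every_service_avoidable:
  assumes X: "maximal_decision_map n v X" and p: "p \<in> price_vectors n"
    and N: "services n \<in> demand n v p"
    and avoid: "\<forall>i\<in>services n. \<exists>S\<in>demand n v p. i \<notin> S"
  shows "pure_nash n X p \<and> X p = services n"
proof -
  have X_demand: "X q \<in> demand n v q" if "q \<in> price_vectors n" for q
    using X that unfolding maximal_decision_map_def decision_map_def by auto
  have "X p \<subseteq> services n"
    using X_demand[OF p] unfolding demand_def by auto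
  then have XN: "X p = services n"
    using X p N unfolding maximal_decision_map_def by blast
  have "seller_utility X i (p(i := q)) \<le> seller_utility X i p"
    if i: "i \<in> services n" and "0 \<le> q" for i q
  proof -
    have "0 \<le> p i"
      using p i unfolding price_vectors_def by auto
    show ?thesis
    proof (cases "q \<le> p i")
      case True
      then show ?thesis
        using XN i \<open>0 \<le> p i\<close> unfolding seller_utility_def by auto
    next
      case False
      have "p(i := q) \<in> price_vectors n"
        using p i \<open>0 \<le> q\<close> unfolding price_vectors_def by auto
      then have "i \<notin> X (p(i := q))"
        using avoid i False demand_fun_upd_excludes_raised X_demand by (meson not_le)
      then show ?thesis
        using XN i \<open>0 \<le> p i\<close> unfolding seller_utility_def by auto
    qed
  qed
  then show ?thesis
    using p XN unfolding pure_nash_def by blast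
qed

theorem mainTheorem2:
  fixes n :: nat and v :: "nat set \<Rightarrow> real" and X :: "(nat \<Rightarrow> real) \<Rightarrow> nat set"
  assumes "valuation n v"
    and "maximal_decision_map n v X"
  shows "\<exists>p\<in>price_vectors n. pure_nash n X p \<and> X p = services n"
proof -
  obtain p where "p \<in> price_vectors n" "services n \<in> demand n v p"
    and "\<forall>i<n. \<exists>S\<in>demand n v p. i \<notin> S"
    using exists_prices_every_service_avoidable[OF assms(1) order_refl] by blast
  moreover from this(3) have "\<forall>i\<in>services n. \<exists>S\<in>demand n v p. i \<notin> S"
    unfolding services_def by simp
  ultimately show ?thesis
    using pure_nash_if_every_service_avoidable[OF assms(2)] by blast
qed

end
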